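(* Let $\Omega\subseteq\mathbb{R}^2$ be a compact domain, $r_d>0$, $a_I>0$, $a_h>0$, $a_v>0$, and let $c_r>0$ be a collision radius. Consider $N$ vehicles with dynamics $\dot p_i=v_i$, $\dot v_i=u_i$ and control law (applied without thresholding) $$u_i=-\sum_{j\neq i}\nabla_i V_I(p_{ij})-\nabla_i V_h(p_i)-a_v v_i.$$ Let $$\Phi=\frac12\sum_{i=1}^N\Bigl(\dot p_i\cdot\dot p_i+\sum_{j\ne i}V_I(p_{ij})+2V_h(p_i)\Bigr).$$ Suppose that for some nonnegative integer $k$, $$\Phi(0)<(k+1)\int_{r_d}^{c_r}f_I(s)\,ds.$$ Then for all $t\ge0$, at most $k$ distinct pairs of vehicles are unsafe at time $t$ (i.e., satisfy $\|p_i(t)-p_j(t)\|\le c_r$); in particular $k=0$ guarantees that no pair is ever unsafe.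
   Context: $p_{ij}:=p_i-p_j$; the signed distance of $x$ from $\partial\Omega$ is positive outside $\Omega$, negative inside. $f_I(r)=a_I(r-r_d)$ for $0\le r<r_d$ and $f_I(r)=0$ for $r\ge r_d$. $V_I(x)=\frac{a_I}{2}(\|x\|-r_d)^2$ for $\|x\|<r_d$, $V_I(x)=0$ otherwise; $V_h(x)=0$ if the signed distance of $x$ to $\partial\Omega$ is $\le -\frac{r_d}{2}$ and $V_h(x)=\frac{a_h}{2}(\text{signed distance}+\frac{r_d}{2})^2$ otherwise. A pair $(i,j)$ is unsafe at time $t$ if $\|p_i(t)-p_j(t)\|\le c_r$. *)

theory Defs
  imports "HOL-Analysis.Analysis"
begin

definition f_I :: "real \<Rightarrow> real \<Rightarrow> real \<Rightarrow> real" where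
  "f_I aI rd r = (if 0 \<le> r \<and> r < rd then aI * (r - rd) else 0)"

definition V_I :: "real \<Rightarrow> real \<Rightarrow> real^2 \<Rightarrow> real" where
  "V_I aI rd x = (if norm x < rd then aI / 2 * (norm x - rd)\<^sup>2 else 0)"

definition signed_dist :: "(real^2) set \<Rightarrow> real^2 \<Rightarrow> real" where
  "signed_dist \<Omega> x = (if x \<in> \<Omega> then - infdist x (frontier \<Omega>) else infdist x (frontier \<Omega>))"

definition V_h :: "(real^2) set \<Rightarrow> real \<Rightarrow> real \<Rightarrow> real^2 \<Rightarrow> real" where
  "V_h \<Omega> ah rd x = (if signed_dist \<Omega> x \<le> - rd / 2 then 0
                      else ah / 2 * (signed_dist \<Omega> x + rd / 2)\<^sup>2)"

definition Phi :: "(real^2) set \<Rightarrow> real \<Rightarrow> real \<Rightarrow> real \<Rightarrow> nat \<Rightarrow>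
    (nat \<Rightarrow> real \<Rightarrow> real^2) \<Rightarrow> (nat \<Rightarrow> real \<Rightarrow> real^2) \<Rightarrow> real \<Rightarrow> real" where
  "Phi \<Omega> rd aI ah N p v t = 1/2 * (\<Sum>i<N. v i t \<bullet> v i t
      + (\<Sum>j\<in>{..<N} - {i}. V_I aI rd (p i t - p j t)) + 2 * V_h \<Omega> ah rd (p i t))"

definition unsafe_pairs :: "real \<Rightarrow> nat \<Rightarrow> (nat \<Rightarrow> real \<Rightarrow> real^2) \<Rightarrow> real \<Rightarrow> (nat \<times> nat) set" where
  "unsafe_pairs cr N p t = {(i, j). i < j \<and> j < N \<and> norm (p i t - p j t) \<le> cr}"

end

theory Submission
  imports Defs
begin

text \<open>The energy \<open>\<Phi>\<close> is a Lyapunov function: \<open>V_I\<close> is even, so its gradient is odd and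
  the interaction terms of \<open>\<Phi>'\<close> cancel in pairs, leaving \<open>\<Phi>' = -a_v \<Sum>|v_i|\<^sup>2 \<le> 0\<close>.
  Every unsafe pair contributes to \<open>\<Phi>\<close> at least the value of \<open>V_I\<close> at distance \<open>c_r\<close>, which
  is the integral of \<open>f_I\<close> over \<open>[r_d, c_r]\<close>, and all other terms of \<open>\<Phi>\<close> are nonnegative.
  Hence \<open>m \<integral> f_I \<le> \<Phi>(t) \<le> \<Phi>(0) < (k+1) \<integral> f_I\<close> for \<open>m\<close> unsafe pairs.\<close>

lemma has_real_derivative_inner_self:
  fixes f :: "real \<Rightarrow> 'a::real_inner"
  assumes "(f has_vector_derivative f') (at t within S)"
  shows "((\<lambda>t. f t \<bullet> f t) has_real_derivative 2 * (f t \<bullet> f')) (at t within S)"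
proof -
  have f: "(f has_derivative (\<lambda>h. h *\<^sub>R f')) (at t within S)"
    using assms by (simp add: has_vector_derivative_def)
  have "((\<lambda>t. f t \<bullet> f t) has_derivative (\<lambda>h. f t \<bullet> (h *\<^sub>R f') + (h *\<^sub>R f') \<bullet> f t)) (at t within S)"
    by (rule has_derivative_inner[OF f f])
  moreover have "(\<lambda>h. f t \<bullet> (h *\<^sub>R f') + (h *\<^sub>R f') \<bullet> f t) = (*) (2 * (f t \<bullet> f'))"
    by (auto simp: fun_eq_iff inner_commute algebra_simps)
  ultimately show ?thesis by (simp add: has_field_derivative_def)
qed

lemma gderiv_compose_has_real_derivative:
  fixes f :: "real \<Rightarrow> 'a::real_inner"
  assumes "GDERIV V (f t) :> g" and "(f has_vector_derivative f') (at t within S)"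
  shows "((\<lambda>t. V (f t)) has_real_derivative g \<bullet> f') (at t within S)"
proof -
  have "((\<lambda>t. V (f t)) has_derivative (\<lambda>h. (h *\<^sub>R f') \<bullet> g)) (at t within S)"
    using has_derivative_compose assms unfolding has_vector_derivative_def gderiv_def by blast
  moreover have "(\<lambda>h. (h *\<^sub>R f') \<bullet> g) = (*) (g \<bullet> f')"
    by (auto simp: fun_eq_iff inner_commute)
  ultimately show ?thesis by (simp add: has_field_derivative_def)
qed

lemma GDERIV_even_imp_odd:
  fixes V :: "'a::real_inner \<Rightarrow> real"
  assumes even: "\<And>x. V (- x) = V x"
    and "GDERIV V x :> g" and "GDERIV V (- x) :> g'"
  shows "g' = - g"
proof -
  have "(uminus has_derivative uminus) (at x)"
    by (rule has_derivative_minus[OF has_derivative_ident])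
  moreover have "(V has_derivative (\<lambda>h. h \<bullet> g')) (at (- x))"
    using assms(3) by (simp add: gderiv_def)
  ultimately have "((\<lambda>y. V (- y)) has_derivative (\<lambda>h. (- h) \<bullet> g')) (at x)"
    by (rule has_derivative_compose)
  then have "GDERIV V x :> - g'"
    unfolding even gderiv_def by simp
  then have "(\<lambda>h. h \<bullet> (- g')) = (\<lambda>h. h \<bullet> g)"
    using assms(2) unfolding gderiv_def by (rule has_derivative_unique)
  then have "(g + g') \<bullet> (- g') = (g + g') \<bullet> g"
    by (rule fun_cong)
  then have "(g + g') \<bullet> (g + g') = 0"
    by (simp add: algebra_simps inner_commute)
  then show ?thesis
    by (simp add: eq_neg_iff_add_eq_0 add.commute)
qed

lemma sum_offdiag_swap:
  fixes F :: "nat \<Rightarrow> nat \<Rightarrow> 'a::comm_monoid_add"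
  shows "(\<Sum>i<N. \<Sum>j\<in>{..<N} - {i}. F i j) = (\<Sum>i<N. \<Sum>j\<in>{..<N} - {i}. F j i)"
proof -
  have "(\<Sum>i<N. \<Sum>j\<in>{..<N} - {i}. F i j) = (\<Sum>i<N. \<Sum>j\<in>{j. j \<in> {..<N} \<and> j \<noteq> i}. F i j)"
    by (intro sum.cong refl) auto
  also have "\<dots> = (\<Sum>j<N. \<Sum>i\<in>{i. i \<in> {..<N} \<and> j \<noteq> i}. F i j)"
    by (rule sum.swap_restrict) auto
  also have "\<dots> = (\<Sum>j<N. \<Sum>i\<in>{..<N} - {j}. F i j)"
    by (intro sum.cong refl) auto
  finally show ?thesis .
qed

lemma sum_offdiag_antisym_eq_0:
  fixes F :: "nat \<Rightarrow> nat \<Rightarrow> 'a::real_vector"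
  assumes antisym: "\<And>i j. i < N \<Longrightarrow> j < N \<Longrightarrow> i \<noteq> j \<Longrightarrow> F j i = - F i j"
  shows "(\<Sum>i<N. \<Sum>j\<in>{..<N} - {i}. F i j) = 0"
proof -
  have "(\<Sum>i<N. \<Sum>j\<in>{..<N} - {i}. F i j) = (\<Sum>i<N. \<Sum>j\<in>{..<N} - {i}. F j i)"
    by (rule sum_offdiag_swap)
  also have "\<dots> = - (\<Sum>i<N. \<Sum>j\<in>{..<N} - {i}. F i j)"
    unfolding sum_negf[symmetric]
  proof (intro sum.cong refl)
    fix i j assume "i \<in> {..<N}" "j \<in> {..<N} - {i}"
    then show "F j i = - F i j" using antisym by blast
  qed
  finally show ?thesis
    by (simp add: eq_neg_iff_add_eq_0 flip: scaleR_2)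
qed

lemma DERIV_within_nonpos_imp_nonincreasing:
  fixes f :: "real \<Rightarrow> real"
  assumes "a \<le> b"
    and deriv: "\<And>x. a \<le> x \<Longrightarrow> x \<le> b \<Longrightarrow> (f has_real_derivative f' x) (at x within {a..b})"
    and nonpos: "\<And>x. a < x \<Longrightarrow> x < b \<Longrightarrow> f' x \<le> 0"
  shows "f b \<le> f a"
proof (rule DERIV_nonpos_imp_decreasing_open[OF \<open>a \<le> b\<close>])
  show "continuous_on {a..b} f"
    using deriv by (intro DERIV_continuous_on) auto
  fix x assume "a < x" "x < b"
  then show "\<exists>y. (f has_real_derivative y) (at x) \<and> y \<le> 0"
    using deriv[of x] nonpos[of x] by (auto simp: at_within_Icc_at)
qed

text \<open>The radial profile of \<open>V_I\<close>; on \<open>[0, \<infinity>)\<close> it is an antiderivative of \<open>f_I\<close>.\<close>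

definition V_I_profile :: "real \<Rightarrow> real \<Rightarrow> real \<Rightarrow> real" where
  "V_I_profile aI rd r = (if r < rd then aI / 2 * (r - rd)\<^sup>2 else 0)"

lemma V_I_eq_profile: "V_I aI rd x = V_I_profile aI rd (norm x)"
  by (simp add: V_I_def V_I_profile_def)

lemma V_I_profile_nonneg: "0 \<le> aI \<Longrightarrow> 0 \<le> V_I_profile aI rd r"
  by (simp add: V_I_profile_def)

lemma V_I_profile_antimono:
  assumes "0 \<le> aI" and "r \<le> s"
  shows "V_I_profile aI rd s \<le> V_I_profile aI rd r"
proof (cases "s < rd")
  case True
  then have "(rd - s)\<^sup>2 \<le> (rd - r)\<^sup>2"
    using assms by (intro power_mono) auto
  then show ?thesis
    using True assms by (simp add: V_I_profile_def power2_commute mult_left_mono)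
next
  case False
  then show ?thesis
    using assms by (simp add: V_I_profile_def)
qed

lemma interval_integral_f_I:
  assumes "0 \<le> r"
  shows "(LBINT s=rd..r. f_I aI rd s) = V_I_profile aI rd r"
proof (cases "r < rd")
  case True
  have "(LBINT s=r..rd. f_I aI rd s) = (LBINT s=r..rd. aI * (s - rd))"
    using True assms by (intro interval_integral_cong) (auto simp: f_I_def einterval_def)
  also have "\<dots> = aI / 2 * (rd - rd)\<^sup>2 - aI / 2 * (r - rd)\<^sup>2"
  proof (rule interval_integral_FTC_finite)
    show "continuous_on {min r rd..max r rd} (\<lambda>s. aI * (s - rd))"
      by (intro continuous_intros)
    fix x
    show "((\<lambda>s. aI / 2 * (s - rd)\<^sup>2) has_vector_derivative aI * (x - rd)) (at x within {min r rd..max r rd})"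
      unfolding has_real_derivative_iff_has_vector_derivative[symmetric]
      by (auto intro!: derivative_eq_intros simp: power2_eq_square algebra_simps)
  qed
  finally show ?thesis
    using True by (subst interval_integral_endpoints_reverse) (simp add: V_I_profile_def)
next
  case False
  have "(LBINT s=rd..r. f_I aI rd s) = (LBINT s=rd..r. 0)"
    using False by (intro interval_integral_cong) (auto simp: f_I_def einterval_def)
  then show ?thesis
    using False by (simp add: V_I_profile_def)
qed

lemma sum_offdiag_ge_double_sum_pairs:
  fixes h :: "nat \<Rightarrow> nat \<Rightarrow> real"
  assumes symm: "\<And>i j. h j i = h i j" and nonneg: "\<And>i j. 0 \<le> h i j"
    and A: "A \<subseteq> {(i, j). i < j \<and> j < N}"
  shows "2 * (\<Sum>(i, j)\<in>A. h i j) \<le> (\<Sum>i<N. \<Sum>j\<in>{..<N} - {i}. h i j)"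
proof -
  define S where "S = Sigma {..<N} (\<lambda>i. {..<N} - {i})"
  have "finite S" "A \<subseteq> S" "prod.swap ` A \<subseteq> S" "A \<inter> prod.swap ` A = {}"
    by (auto simp: S_def dest!: subsetD[OF A])
  moreover from this have "finite A"
    by (meson finite_subset)
  ultimately have "2 * (\<Sum>(i, j)\<in>A. h i j) = (\<Sum>(i, j)\<in>A \<union> prod.swap ` A. h i j)"
    by (simp add: sum.union_disjoint sum.reindex symm case_prod_unfold)
  also have "\<dots> \<le> (\<Sum>(i, j)\<in>S. h i j)"
    using \<open>finite S\<close> \<open>A \<subseteq> S\<close> \<open>prod.swap ` A \<subseteq> S\<close> nonneg
    by (intro sum_mono2) auto
  also have "\<dots> = (\<Sum>i<N. \<Sum>j\<in>{..<N} - {i}. h i j)"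
    unfolding S_def by (subst sum.Sigma) auto
  finally show ?thesis .
qed

lemma card_unsafe_pairs_le_Phi:
  assumes "0 \<le> aI" and "0 \<le> ah"
  shows "real (card (unsafe_pairs cr N p t)) * V_I_profile aI rd cr \<le> Phi \<Omega> rd aI ah N p v t"
proof -
  let ?U = "unsafe_pairs cr N p t"
  let ?VI = "\<lambda>i j. V_I aI rd (p i t - p j t)"
  have "real (card ?U) * V_I_profile aI rd cr \<le> (\<Sum>(i, j)\<in>?U. ?VI i j)"
    using sum_bounded_below[of ?U "V_I_profile aI rd cr" "\<lambda>(i, j). ?VI i j"] assms(1)
    by (auto simp: unsafe_pairs_def V_I_eq_profile intro: V_I_profile_antimono)
  also have "2 * \<dots> \<le> (\<Sum>i<N. \<Sum>j\<in>{..<N} - {i}. ?VI i j)"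
    using assms(1)
    by (intro sum_offdiag_ge_double_sum_pairs)
       (auto simp: unsafe_pairs_def V_I_eq_profile norm_minus_commute V_I_profile_nonneg)
  also have "\<dots> \<le> 2 * Phi \<Omega> rd aI ah N p v t"
  proof -
    have "0 \<le> V_h \<Omega> ah rd x" for x
      using assms(2) by (simp add: V_h_def)
    then have "0 \<le> (\<Sum>i<N. v i t \<bullet> v i t)" "0 \<le> (\<Sum>i<N. 2 * V_h \<Omega> ah rd (p i t))"
      by (simp_all add: sum_nonneg)
    then show ?thesis
      by (simp add: Phi_def sum.distrib)
  qed
  finally show ?thesis
    by linarith
qed
lemma Phi_has_real_derivative:
  fixes p v :: "nat \<Rightarrow> real \<Rightarrow> real^2"
  assumes gradI: "\<And>i j. i < N \<Longrightarrow> j < N \<Longrightarrow> i \<noteq> j \<Longrightarrow>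
                 GDERIV (V_I aI rd) (p i t - p j t) :> gI (p i t - p j t)"
    and gradh: "\<And>i. i < N \<Longrightarrow> GDERIV (V_h \<Omega> ah rd) (p i t) :> gh (p i t)"
    and dp: "\<And>i. i < N \<Longrightarrow> (p i has_vector_derivative v i t) (at t within S)"
    and dv: "\<And>i. i < N \<Longrightarrow>
              (v i has_vector_derivative
                 (- (\<Sum>j\<in>{..<N} - {i}. gI (p i t - p j t)) - gh (p i t) - av *\<^sub>R v i t))
              (at t within S)"
  shows "(Phi \<Omega> rd aI ah N p v has_real_derivative - av * (\<Sum>i<N. v i t \<bullet> v i t)) (at t within S)"
proof -
  let ?g = "\<lambda>i j. gI (p i t - p j t)"
  let ?u = "\<lambda>i. - (\<Sum>j\<in>{..<N} - {i}. ?g i j) - gh (p i t) - av *\<^sub>R v i t"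
  let ?D = "\<lambda>i. 2 * (v i t \<bullet> ?u i) + (\<Sum>j\<in>{..<N} - {i}. ?g i j \<bullet> (v i t - v j t))
                + 2 * (gh (p i t) \<bullet> v i t)"
  have "(Phi \<Omega> rd aI ah N p v has_real_derivative 1/2 * (\<Sum>i<N. ?D i)) (at t within S)"
    unfolding Phi_def
  proof (intro DERIV_cmult DERIV_sum DERIV_add)
    fix i j assume "i \<in> {..<N}" "j \<in> {..<N} - {i}"
    then show "((\<lambda>t. V_I aI rd (p i t - p j t)) has_real_derivative ?g i j \<bullet> (v i t - v j t))
        (at t within S)"
      using gradI dp by (auto intro!: gderiv_compose_has_real_derivative has_vector_derivative_diff)
  qed (use has_real_derivative_inner_self[OF dv] gderiv_compose_has_real_derivative[OF gradh dp] in auto)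
  moreover have "(\<Sum>i<N. \<Sum>j\<in>{..<N} - {i}. ?g i j \<bullet> (v i t + v j t)) = 0"
  proof (rule sum_offdiag_antisym_eq_0)
    fix i j assume "i < N" "j < N" "i \<noteq> j"
    then have "?g j i = - ?g i j"
      using GDERIV_even_imp_odd[of "V_I aI rd"] gradI[of i j] gradI[of j i]
      by (simp add: V_I_def)
    then show "?g j i \<bullet> (v j t + v i t) = - (?g i j \<bullet> (v i t + v j t))"
      by (simp add: add.commute)
  qed
  moreover have "?D i = - (\<Sum>j\<in>{..<N} - {i}. ?g i j \<bullet> (v i t + v j t)) - 2 * av * (v i t \<bullet> v i t)" for i
    by (simp add: inner_diff_right inner_add_right inner_sum_right inner_commute sum_subtractf
        sum.distrib algebra_simps)
  ultimately show ?thesis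
    by (simp add: sum_subtractf sum_negf sum_distrib_left)
qed

theorem proposition4:
  fixes \<Omega> :: "(real^2) set"
    and rd aI ah av cr :: real
    and N k :: nat
    and p v :: "nat \<Rightarrow> real \<Rightarrow> real^2"
    and gI gh :: "real^2 \<Rightarrow> real^2"
  assumes "compact \<Omega>" and "connected (interior \<Omega>)" and "interior \<Omega> \<noteq> {}"
    and "rd > 0" and "aI > 0" and "ah > 0" and "av > 0" and "cr > 0"
    \<comment> \<open>gI and gh are the gradients of V_I and V_h wherever the control law evaluates them\<close>
    and gradI: "\<And>t i j. t \<ge> 0 \<Longrightarrow> i < N \<Longrightarrow> j < N \<Longrightarrow> i \<noteq> j \<Longrightarrow>
                 GDERIV (V_I aI rd) (p i t - p j t) :> gI (p i t - p j t)"
    and gradh: "\<And>t i. t \<ge> 0 \<Longrightarrow> i < N \<Longrightarrow> GDERIV (V_h \<Omega> ah rd) (p i t) :> gh (p i t)"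
    \<comment> \<open>dynamics: p_i' = v_i, v_i' = u_i with the control law\<close>
    and dp: "\<And>t i. t \<ge> 0 \<Longrightarrow> i < N \<Longrightarrow> (p i has_vector_derivative v i t) (at t within {0..})"
    and dv: "\<And>t i. t \<ge> 0 \<Longrightarrow> i < N \<Longrightarrow>
              (v i has_vector_derivative
                 (- (\<Sum>j\<in>{..<N} - {i}. gI (p i t - p j t)) - gh (p i t) - av *\<^sub>R v i t))
              (at t within {0..})"
    and init: "Phi \<Omega> rd aI ah N p v 0 < real (k + 1) * (LBINT s=rd..cr. f_I aI rd s)"
  shows "\<forall>t\<ge>0. card (unsafe_pairs cr N p t) \<le> k"
proof (intro allI impI)
  fix t :: real
  assume "t \<ge> 0"
  let ?c = "V_I_profile aI rd cr"
  have "real (card (unsafe_pairs cr N p t)) * ?c \<le> Phi \<Omega> rd aI ah N p v t"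
    using \<open>aI > 0\<close> \<open>ah > 0\<close> by (intro card_unsafe_pairs_le_Phi) auto
  also have "\<dots> \<le> Phi \<Omega> rd aI ah N p v 0"
  proof (rule DERIV_within_nonpos_imp_nonincreasing[OF \<open>t \<ge> 0\<close>])
    fix s assume "0 \<le> s" "s \<le> t"
    then show "(Phi \<Omega> rd aI ah N p v has_real_derivative - av * (\<Sum>i<N. v i s \<bullet> v i s))
        (at s within {0..t})"
      by (intro Phi_has_real_derivative[where gI = gI and gh = gh] gradI gradh
          has_vector_derivative_within_subset[OF dp] has_vector_derivative_within_subset[OF dv]) auto
  qed (use \<open>av > 0\<close> in \<open>simp add: sum_nonneg\<close>)
  also have "\<dots> < real (k + 1) * ?c"
    using init interval_integral_f_I[of cr rd aI] \<open>cr > 0\<close> by simp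
  finally show "card (unsafe_pairs cr N p t) \<le> k"
    using V_I_profile_nonneg[of aI rd cr] \<open>aI > 0\<close> by (simp add: mult_less_cancel_right)
qed

end
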